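(* Let $n\ge2$, $\kappa>0$, and let $\tilde\theta:\mathbb R\to[0,\infty)$ be locally Lipschitz and nondecreasing with $\tilde\theta(s)=0$ for $s\le 0$ and $\tilde\theta(s)>0$ for $s>0$; set $\theta(a,b)=\tilde\theta(\min(a,b))$. Let $\rho:[0,\infty)\to\mathbb R^n$ be the solution of $$\frac{d\rho_j}{dt}=\kappa\sum_{k=1}^n\theta(\rho_j,\rho_k)(\rho_j-\rho_k),\qquad j=1,\dots,n,$$ with $\rho(0)\in\mathcal P$. Let $\mathcal S_M=\{j\in\{1,\dots,n\}:\rho_j(0)=\max_{1\le k\le n}\rho_k(0)\}$ and $m=|\mathcal S_M|$. Then $$\lim_{t\to\infty}\rho_j(t)=\frac1m\ \ \forall j\in\mathcal S_M,\qquad \lim_{t\to\infty}\rho_k(t)=0\ \ \forall k\notin\mathcal S_M.$$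
   Context: $\mathcal P=\{\rho\in\mathbb R^n:\rho_i\ge0\ \forall i,\ \sum_{i=1}^n\rho_i=1\}$ denotes the probability simplex. *)

theory Defs
  imports "HOL-Analysis.Analysis"
begin

definition locally_lipschitz_real :: "(real \<Rightarrow> real) \<Rightarrow> bool" where
  "locally_lipschitz_real f \<longleftrightarrow>
     (\<forall>x. \<exists>e>0. \<exists>L. lipschitz_on L (cball x e) f)"

definition prob_simplex :: "(real ^ 'n) set" where
  "prob_simplex = {r. (\<forall>i. r $ i \<ge> 0) \<and> (\<Sum>i\<in>UNIV. r $ i) = 1}"

end

theory Submission
  imports Defs
begin

text \<open>
  Write \<open>d\<^sub>j\<close> for the right-hand side of the equation for \<open>\<rho>\<^sub>j\<close>. On every compact time
  interval the map \<open>\<rho>\<^sub>j \<mapsto> d\<^sub>j\<close> is Lipschitz, and it vanishes at \<open>\<rho>\<^sub>j = 0\<close>, so a Gronwall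
  argument shows that the flow preserves the sign of every \<open>\<rho>\<^sub>j\<close> and of every difference
  \<open>\<rho>\<^sub>j - \<rho>\<^sub>k\<close>: the components stay non-negative, their initial order is kept, and ties persist.
  The interaction is antisymmetric, so the total mass stays 1. A maximal component \<open>\<rho>\<^sub>M\<close>
  is non-decreasing and bounded, hence eventually almost constant; but while a component
  \<open>\<rho>\<^sub>k\<close> that started strictly below it is at least \<open>\<epsilon>\<close>, \<open>\<rho>\<^sub>M\<close> grows at a rate at least
  \<open>\<kappa> \<theta>(\<epsilon>) (\<rho>\<^sub>M(0) - \<rho>\<^sub>k(0))\<close>, and \<open>\<rho>\<^sub>k\<close> can only decrease at a bounded rate. Hence every such
  \<open>\<rho>\<^sub>k\<close> tends to 0, and the tied maximal components share the remaining mass equally.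
\<close>

lemma DERIV_ge_imp_increment:
  fixes f f' :: "real \<Rightarrow> real"
  assumes "a \<le> b" and "continuous_on {a..b} f"
    and "\<And>x. a < x \<Longrightarrow> x < b \<Longrightarrow> (f has_real_derivative f' x) (at x)"
    and "\<And>x. a < x \<Longrightarrow> x < b \<Longrightarrow> c \<le> f' x"
  shows "c * (b - a) \<le> f b - f a"
proof -
  have "f a - c * a \<le> f b - c * b"
  proof (rule DERIV_nonneg_imp_increasing_open[of a b "\<lambda>x. f x - c * x"])
    fix x assume "a < x" "x < b"
    then have "((\<lambda>x. f x - c * x) has_real_derivative f' x - c) (at x)"
      by (auto intro!: derivative_eq_intros assms(3))
    then show "\<exists>y. ((\<lambda>x. f x - c * x) has_real_derivative y) (at x) \<and> 0 \<le> y"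
      using assms(4) \<open>a < x\<close> \<open>x < b\<close> by force
  qed (use assms(1,2) in \<open>auto intro!: continuous_intros\<close>)
  then show ?thesis by (simp add: algebra_simps)
qed

lemma gronwall_zero_persists:
  fixes d d' :: "real \<Rightarrow> real"
  assumes "a \<le> b" and "continuous_on {a..b} d"
    and D: "\<And>x. a < x \<Longrightarrow> x < b \<Longrightarrow> (d has_real_derivative d' x) (at x)"
    and bound: "\<And>x. a < x \<Longrightarrow> x < b \<Longrightarrow> \<bar>d' x\<bar> \<le> C * \<bar>d x\<bar>"
    and "d a = 0"
  shows "d b = 0"
proof -
  \<comment> \<open>\<open>exp (-2 C x) d(x)\<^sup>2\<close> is non-increasing and non-negative.\<close>
  define f where "f x = - (exp (-2 * C * x) * (d x)\<^sup>2)" for x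
  have "0 * (b - a) \<le> f b - f a"
  proof (rule DERIV_ge_imp_increment[OF assms(1)])
    show "continuous_on {a..b} f"
      unfolding f_def by (intro continuous_intros assms(2))
    fix x assume x: "a < x" "x < b"
    show "(f has_real_derivative 2 * exp (-2 * C * x) * (C * (d x)\<^sup>2 - d x * d' x)) (at x)"
      unfolding f_def by (rule derivative_eq_intros D[OF x] refl | simp add: algebra_simps power2_eq_square)+
    have "d x * d' x \<le> \<bar>d x\<bar> * \<bar>d' x\<bar>" by (simp add: abs_mult[symmetric])
    also have "\<dots> \<le> C * (d x)\<^sup>2"
      using mult_left_mono[OF bound[OF x] abs_ge_zero[of "d x"]]
      by (simp add: power2_eq_square abs_mult_self_eq mult_ac)
    finally show "0 \<le> 2 * exp (-2 * C * x) * (C * (d x)\<^sup>2 - d x * d' x)" by simp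
  qed
  then have "exp (-2 * C * b) * (d b)\<^sup>2 \<le> 0" using \<open>d a = 0\<close> by (simp add: f_def)
  then show ?thesis by (simp add: mult_le_0_iff)
qed

lemma gronwall_nonneg_persists:
  fixes d d' :: "real \<Rightarrow> real"
  assumes "a \<le> b" and cont: "continuous_on {a..b} d"
    and D: "\<And>x. a < x \<Longrightarrow> x < b \<Longrightarrow> (d has_real_derivative d' x) (at x)"
    and bound: "\<And>x. a < x \<Longrightarrow> x < b \<Longrightarrow> \<bar>d' x\<bar> \<le> C * \<bar>d x\<bar>"
    and "d a \<ge> 0"
  shows "d b \<ge> 0"
proof (rule ccontr)
  assume "\<not> d b \<ge> 0"
  then obtain u where u: "a \<le> u" "u \<le> b" "d u = 0"
    using IVT2'[of d b 0 a] \<open>a \<le> b\<close> cont \<open>d a \<ge> 0\<close> by auto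
  have "d b = 0"
  proof (rule gronwall_zero_persists[of u b d d' C])
    show "continuous_on {u..b} d" using cont by (rule continuous_on_subset) (use u in auto)
  qed (use u D bound in auto)
  with \<open>\<not> d b \<ge> 0\<close> show False by simp
qed

lemma locally_lipschitz_real_lipschitz_on_compact:
  assumes "locally_lipschitz_real f" and "compact X"
  obtains L where "L-lipschitz_on X f"
proof -
  have "local_lipschitz {0::real} X (\<lambda>_. f)"
    unfolding local_lipschitz_def
  proof (intro ballI)
    fix x t assume "x \<in> X" "t \<in> {0::real}"
    obtain e L where "e > 0" "L-lipschitz_on (cball x e) f"
      using assms(1) unfolding locally_lipschitz_real_def by blast
    then show "\<exists>u>0. \<exists>L. \<forall>t\<in>cball t u \<inter> {0}. L-lipschitz_on (cball x u \<inter> X) ((\<lambda>_. f) t)"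
      using lipschitz_on_subset by blast
  qed
  then obtain L where "\<And>t. t \<in> {0::real} \<Longrightarrow> L-lipschitz_on X f"
    by (rule local_lipschitz_compact_implies_lipschitz) (use assms(2) in auto)
  then show ?thesis using that by blast
qed

lemma near_supremum:
  fixes f :: "'a \<Rightarrow> real"
  assumes "A \<noteq> {}" and "bdd_above (f ` A)" and "\<epsilon> > 0"
  obtains t0 where "t0 \<in> A" and "\<And>s. s \<in> A \<Longrightarrow> f s < f t0 + \<epsilon>"
proof -
  have "(SUP s\<in>A. f s) - \<epsilon> < (SUP s\<in>A. f s)" using \<open>\<epsilon> > 0\<close> by simp
  then obtain t0 where "t0 \<in> A" "(SUP s\<in>A. f s) - \<epsilon> < f t0"
    using less_cSUP_iff[OF assms(1,2)] by blast
  moreover have "f s \<le> (SUP s\<in>A. f s)" if "s \<in> A" for s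
    using cSUP_upper[OF that assms(2)] .
  ultimately show ?thesis using that by force
qed

definition interaction :: "(real \<Rightarrow> real) \<Rightarrow> real \<Rightarrow> real \<Rightarrow> real" where
  "interaction \<theta> x y = \<theta> (min x y) * (x - y)"

definition velocity :: "real \<Rightarrow> (real \<Rightarrow> real) \<Rightarrow> real ^ 'n \<Rightarrow> real \<Rightarrow> real" where
  "velocity \<kappa> \<theta> r x = \<kappa> * (\<Sum>l\<in>UNIV. interaction \<theta> x (r $ l))"

lemma interaction_antisym: "interaction \<theta> x y = - interaction \<theta> y x"
  by (simp add: interaction_def min.commute algebra_simps)

lemma interaction_nonneg: "(\<And>s. \<theta> s \<ge> 0) \<Longrightarrow> y \<le> x \<Longrightarrow> interaction \<theta> x y \<ge> 0"
  by (simp add: interaction_def)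

lemma interaction_mono_below_max:
  assumes mono: "mono \<theta>" and nonneg: "\<And>s. \<theta> s \<ge> 0" and "y \<le> x" "z \<le> x"
  shows "interaction \<theta> z y \<le> interaction \<theta> x y"
proof (cases "y \<le> z")
  case True
  then have "min x y = y" "min z y = y" using assms by auto
  then have "interaction \<theta> x y - interaction \<theta> z y = \<theta> y * (x - z)"
    by (simp add: interaction_def algebra_simps)
  moreover have "0 \<le> \<theta> y * (x - z)" using nonneg[of y] \<open>z \<le> x\<close> by simp
  ultimately show ?thesis by linarith
next
  case False
  then have "min x y = y" "min z y = z" using assms by auto
  then have "interaction \<theta> x y - interaction \<theta> z y = \<theta> y * (x - y) + \<theta> z * (y - z)"
    by (simp add: interaction_def algebra_simps)
  moreover have "0 \<le> \<theta> y * (x - y) + \<theta> z * (y - z)"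
    using nonneg[of y] nonneg[of z] \<open>y \<le> x\<close> False by simp
  ultimately show ?thesis by linarith
qed

lemma interaction_lipschitz:
  assumes mono: "mono \<theta>" and nonneg: "\<And>s. \<theta> s \<ge> 0" and L: "L-lipschitz_on {-B..B} \<theta>"
    and x: "x \<in> {-B..B}" and x': "x' \<in> {-B..B}" and y: "y \<in> {-B..B}"
  shows "\<bar>interaction \<theta> x y - interaction \<theta> x' y\<bar> \<le> (\<theta> B + 2 * B * L) * \<bar>x - x'\<bar>"
proof -
  have L0: "L \<ge> 0" using L by (rule lipschitz_on_nonneg)
  have split: "interaction \<theta> x y - interaction \<theta> x' y
      = \<theta> (min x y) * (x - x') + (\<theta> (min x y) - \<theta> (min x' y)) * (x' - y)"
    by (simp add: interaction_def algebra_simps)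
  have theta_bound: "\<bar>\<theta> (min x y)\<bar> \<le> \<theta> B"
    using monoD[OF mono, of "min x y" B] nonneg[of "min x y"] x by auto
  have "\<bar>\<theta> (min x y) - \<theta> (min x' y)\<bar> \<le> L * \<bar>min x y - min x' y\<bar>"
    using lipschitz_onD[OF L, of "min x y" "min x' y"] x x' y by (auto simp: dist_real_def)
  also have "\<dots> \<le> L * \<bar>x - x'\<bar>"
    using L0 by (intro mult_left_mono) (auto simp: min_def)
  finally have theta_diff: "\<bar>\<theta> (min x y) - \<theta> (min x' y)\<bar> \<le> L * \<bar>x - x'\<bar>" .
  have "\<bar>x' - y\<bar> \<le> 2 * B" using x' y by (simp add: abs_le_iff)
  have "\<bar>interaction \<theta> x y - interaction \<theta> x' y\<bar>
      \<le> \<bar>\<theta> (min x y)\<bar> * \<bar>x - x'\<bar> + \<bar>\<theta> (min x y) - \<theta> (min x' y)\<bar> * \<bar>x' - y\<bar>"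
    unfolding split by (metis abs_mult abs_triangle_ineq)
  also have "\<dots> \<le> \<theta> B * \<bar>x - x'\<bar> + (L * \<bar>x - x'\<bar>) * (2 * B)"
    using theta_bound theta_diff \<open>\<bar>x' - y\<bar> \<le> 2 * B\<close> L0
    by (intro add_mono mult_mono mult_right_mono) auto
  also have "\<dots> = (\<theta> B + 2 * B * L) * \<bar>x - x'\<bar>" by (simp add: algebra_simps)
  finally show ?thesis .
qed

lemma sum_velocity_eq_0: "(\<Sum>j\<in>UNIV. velocity \<kappa> \<theta> r (r $ j)) = 0"
proof -
  define S where "S = (\<Sum>j\<in>UNIV. \<Sum>k\<in>UNIV. interaction \<theta> (r $ j) (r $ k))"
  have "S = (\<Sum>k\<in>UNIV. \<Sum>j\<in>UNIV. - interaction \<theta> (r $ k) (r $ j))"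
    unfolding S_def by (subst sum.swap) (subst interaction_antisym, rule refl)
  also have "\<dots> = - S" by (simp add: S_def sum_negf)
  finally have "S = 0" by simp
  then show ?thesis by (simp add: velocity_def S_def sum_distrib_left[symmetric])
qed

lemma velocity_at_0: "(\<And>s. s \<le> 0 \<Longrightarrow> \<theta> s = 0) \<Longrightarrow> velocity \<kappa> \<theta> r 0 = 0"
  by (simp add: velocity_def interaction_def)

lemma velocity_lipschitz:
  fixes r :: "real ^ 'n" and \<theta> :: "real \<Rightarrow> real"
  assumes "\<kappa> \<ge> 0" and "mono \<theta>" and "\<And>s. \<theta> s \<ge> 0" and "L-lipschitz_on {-B..B} \<theta>"
    and "\<And>l. \<bar>r $ l\<bar> \<le> B" and "x \<in> {-B..B}" and "x' \<in> {-B..B}"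
  shows "\<bar>velocity \<kappa> \<theta> r x - velocity \<kappa> \<theta> r x'\<bar>
           \<le> \<kappa> * real CARD('n) * (\<theta> B + 2 * B * L) * \<bar>x - x'\<bar>"
proof -
  have r: "r $ l \<in> {-B..B}" for l using assms(5)[of l] by (simp add: abs_le_iff)
  have "\<bar>velocity \<kappa> \<theta> r x - velocity \<kappa> \<theta> r x'\<bar>
      = \<kappa> * \<bar>\<Sum>l\<in>UNIV. interaction \<theta> x (r $ l) - interaction \<theta> x' (r $ l)\<bar>"
    using assms(1) by (simp add: velocity_def sum_subtractf right_diff_distrib[symmetric] abs_mult)
  also have "\<dots> \<le> \<kappa> * (\<Sum>l\<in>UNIV. \<bar>interaction \<theta> x (r $ l) - interaction \<theta> x' (r $ l)\<bar>)"
    using assms(1) by (intro mult_left_mono sum_abs) auto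
  also have "\<dots> \<le> \<kappa> * (\<Sum>l\<in>(UNIV::'n set). (\<theta> B + 2 * B * L) * \<bar>x - x'\<bar>)"
    using assms r by (intro mult_left_mono sum_mono interaction_lipschitz) auto
  finally show ?thesis by simp
qed

lemma velocity_at_max_ge:
  fixes r :: "real ^ 'n"
  assumes "\<kappa> \<ge> 0" and "\<And>s. \<theta> s \<ge> 0" and max: "\<And>l. r $ l \<le> r $ M"
  shows "\<kappa> * (\<theta> (r $ k) * (r $ M - r $ k)) \<le> velocity \<kappa> \<theta> r (r $ M)"
proof -
  have "interaction \<theta> (r $ M) (r $ k) \<le> (\<Sum>l\<in>UNIV. interaction \<theta> (r $ M) (r $ l))"
    using assms(2) max by (intro member_le_sum interaction_nonneg) auto
  moreover have "interaction \<theta> (r $ M) (r $ k) = \<theta> (r $ k) * (r $ M - r $ k)"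
    using max[of k] by (simp add: interaction_def min_def)
  ultimately show ?thesis using assms(1) by (simp add: velocity_def mult_left_mono)
qed

lemma velocity_le_at_max:
  fixes r :: "real ^ 'n"
  assumes "\<kappa> \<ge> 0" and "mono \<theta>" and "\<And>s. \<theta> s \<ge> 0" and max: "\<And>l. r $ l \<le> r $ M"
  shows "velocity \<kappa> \<theta> r (r $ k) \<le> velocity \<kappa> \<theta> r (r $ M)"
  unfolding velocity_def
  using assms by (intro mult_left_mono sum_mono interaction_mono_below_max) auto

lemma velocity_lower_bound:
  fixes r :: "real ^ 'n" and \<theta> :: "real \<Rightarrow> real"
  assumes "\<kappa> \<ge> 0" and "mono \<theta>" and "\<And>s. \<theta> s \<ge> 0"
    and "\<And>l. r $ l \<le> 1" and "0 \<le> x" "x \<le> 1"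
  shows "- (\<kappa> * real CARD('n) * \<theta> 1) \<le> velocity \<kappa> \<theta> r x"
proof -
  have "- \<theta> 1 \<le> interaction \<theta> x (r $ l)" for l
  proof -
    have "\<theta> (min x (r $ l)) \<le> \<theta> 1" using assms by (intro monoD[OF \<open>mono \<theta>\<close>]) auto
    moreover have "\<theta> (min x (r $ l)) * (-1) \<le> \<theta> (min x (r $ l)) * (x - r $ l)"
      using assms(3,5) assms(4)[of l] by (intro mult_left_mono) auto
    ultimately show ?thesis by (simp add: interaction_def)
  qed
  then have "(\<Sum>l\<in>(UNIV::'n set). - \<theta> 1) \<le> (\<Sum>l\<in>UNIV. interaction \<theta> x (r $ l))"
    by (intro sum_mono)
  then show ?thesis
    using mult_left_mono[OF _ \<open>\<kappa> \<ge> 0\<close>] by (fastforce simp: velocity_def)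
qed

locale aggregation_flow =
  fixes \<kappa> :: real and \<theta> :: "real \<Rightarrow> real" and \<rho> :: "real \<Rightarrow> real ^ ('n::finite)"
  assumes kappa_pos: "\<kappa> > 0"
    and theta_nonneg: "\<And>s. \<theta> s \<ge> 0"
    and theta_lipschitz: "locally_lipschitz_real \<theta>"
    and theta_mono: "mono \<theta>"
    and theta_vanishes: "\<And>s. s \<le> 0 \<Longrightarrow> \<theta> s = 0"
    and theta_pos: "\<And>s. s > 0 \<Longrightarrow> \<theta> s > 0"
    and ode: "\<And>t. t \<ge> 0 \<Longrightarrow>
       (\<rho> has_vector_derivative
          (\<chi> j. \<kappa> * (\<Sum>k\<in>UNIV. \<theta> (min (\<rho> t $ j) (\<rho> t $ k)) * (\<rho> t $ j - \<rho> t $ k))))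
       (at t within {0..})"
    and init: "\<rho> 0 \<in> prob_simplex"
begin

abbreviation drift :: "real \<Rightarrow> 'n \<Rightarrow> real" where
  "drift t j \<equiv> velocity \<kappa> \<theta> (\<rho> t) (\<rho> t $ j)"

lemma component_has_derivative_within:
  "t \<ge> 0 \<Longrightarrow> ((\<lambda>s. \<rho> s $ j) has_real_derivative drift t j) (at t within {0..})"
  using bounded_linear.has_vector_derivative[OF bounded_linear_vec_nth ode]
  by (simp add: has_real_derivative_iff_has_vector_derivative velocity_def interaction_def)

lemma component_has_derivative:
  assumes "t > 0" shows "((\<lambda>s. \<rho> s $ j) has_real_derivative drift t j) (at t)"
proof -
  have "at t within {0..} = at t within {0<..}"
    using assms by (intro at_within_nhd[of _ "{0<..}"]) auto
  also have "\<dots> = at t" using assms by (intro at_within_open) auto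
  finally show ?thesis using component_has_derivative_within[of t j] assms by simp
qed

lemma component_continuous_on: "0 \<le> a \<Longrightarrow> continuous_on {a..b} (\<lambda>s. \<rho> s $ j)"
  by (rule continuous_on_subset[of "{0..}"])
     (auto simp: continuous_on_eq_continuous_within
           intro: DERIV_continuous component_has_derivative_within)

lemma trajectory_bounded_on:
  obtains B where "B \<ge> 0" and "\<And>t i. t \<in> {0..T} \<Longrightarrow> \<bar>\<rho> t $ i\<bar> \<le> B"
proof -
  have "continuous_on {0..T} \<rho>"
    by (rule continuous_on_subset[of "{0..}"])
       (auto simp: continuous_on_eq_continuous_within intro: has_vector_derivative_continuous ode)
  then have "bounded (\<rho> ` {0..T})" by (intro compact_imp_bounded compact_continuous_image) auto
  then obtain B where "B > 0" "\<And>t. t \<in> {0..T} \<Longrightarrow> norm (\<rho> t) \<le> B"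
    unfolding bounded_pos by blast
  then show ?thesis using that component_le_norm_cart order_trans by (metis less_imp_le)
qed

lemma drift_lipschitz_on:
  obtains C where "\<And>t j k. t \<in> {0..T} \<Longrightarrow> \<bar>drift t j - drift t k\<bar> \<le> C * \<bar>\<rho> t $ j - \<rho> t $ k\<bar>"
    and "\<And>t j. t \<in> {0..T} \<Longrightarrow> \<bar>drift t j\<bar> \<le> C * \<bar>\<rho> t $ j\<bar>"
proof -
  obtain B where B: "B \<ge> 0" "\<And>t i. t \<in> {0..T} \<Longrightarrow> \<bar>\<rho> t $ i\<bar> \<le> B"
    using trajectory_bounded_on[where T=T] by blast
  obtain L where L: "L-lipschitz_on {-B..B} \<theta>"
    using locally_lipschitz_real_lipschitz_on_compact[OF theta_lipschitz] by blast
  define C where "C = \<kappa> * real CARD('n) * (\<theta> B + 2 * B * L)"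
  have C: "\<bar>velocity \<kappa> \<theta> (\<rho> t) x - velocity \<kappa> \<theta> (\<rho> t) x'\<bar> \<le> C * \<bar>x - x'\<bar>"
    if "t \<in> {0..T}" "\<bar>x\<bar> \<le> B" "\<bar>x'\<bar> \<le> B" for t x x'
    unfolding C_def using that kappa_pos B(2)
    by (intro velocity_lipschitz theta_mono theta_nonneg L) (auto simp: abs_le_iff)
  show ?thesis
  proof (rule that)
    fix t j k assume "t \<in> {0..T}"
    then show "\<bar>drift t j - drift t k\<bar> \<le> C * \<bar>\<rho> t $ j - \<rho> t $ k\<bar>" using B(2) by (intro C)
  next
    fix t j assume "t \<in> {0..T}"
    then show "\<bar>drift t j\<bar> \<le> C * \<bar>\<rho> t $ j\<bar>"
      using C[of t "\<rho> t $ j" 0] B by (simp add: velocity_at_0 theta_vanishes)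
  qed
qed

lemma order_preserved:
  assumes "0 \<le> t" and "\<rho> 0 $ k \<le> \<rho> 0 $ j"
  shows "\<rho> t $ k \<le> \<rho> t $ j"
proof -
  obtain C where C: "\<And>s j k. s \<in> {0..t} \<Longrightarrow> \<bar>drift s j - drift s k\<bar> \<le> C * \<bar>\<rho> s $ j - \<rho> s $ k\<bar>"
    using drift_lipschitz_on[where T=t] by metis
  have "\<rho> t $ j - \<rho> t $ k \<ge> 0"
  proof (rule gronwall_nonneg_persists[where a=0 and b=t and d="\<lambda>s. \<rho> s $ j - \<rho> s $ k"])
    show "continuous_on {0..t} (\<lambda>s. \<rho> s $ j - \<rho> s $ k)"
      by (intro continuous_on_diff component_continuous_on) simp_all
    fix x :: real assume "0 < x" "x < t"
    then show "((\<lambda>s. \<rho> s $ j - \<rho> s $ k) has_real_derivative drift x j - drift x k) (at x)"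
      by (intro DERIV_diff component_has_derivative)
    show "\<bar>drift x j - drift x k\<bar> \<le> C * \<bar>\<rho> x $ j - \<rho> x $ k\<bar>"
      using C \<open>0 < x\<close> \<open>x < t\<close> by simp
  qed (use assms in simp_all)
  then show ?thesis by simp
qed

lemma tie_preserved:
  assumes "0 \<le> t" and "\<rho> 0 $ k = \<rho> 0 $ j"
  shows "\<rho> t $ k = \<rho> t $ j"
  using order_preserved[of t k j] order_preserved[of t j k] assms by simp

lemma component_nonneg:
  assumes "0 \<le> t" shows "\<rho> t $ j \<ge> 0"
proof -
  obtain C where C: "\<And>s j. s \<in> {0..t} \<Longrightarrow> \<bar>drift s j\<bar> \<le> C * \<bar>\<rho> s $ j\<bar>"
    using drift_lipschitz_on[where T=t] by metis
  show ?thesis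
  proof (rule gronwall_nonneg_persists[where a=0 and b=t and d="\<lambda>s. \<rho> s $ j"])
    show "continuous_on {0..t} (\<lambda>s. \<rho> s $ j)" by (rule component_continuous_on) simp
    fix x :: real assume "0 < x" "x < t"
    then show "((\<lambda>s. \<rho> s $ j) has_real_derivative drift x j) (at x)"
      by (intro component_has_derivative)
    show "\<bar>drift x j\<bar> \<le> C * \<bar>\<rho> x $ j\<bar>"
      using C \<open>0 < x\<close> \<open>x < t\<close> by simp
  next
    show "\<rho> 0 $ j \<ge> 0" using init by (simp add: prob_simplex_def)
  qed (use assms in simp)
qed

lemma mass_conserved:
  assumes "0 \<le> t" shows "(\<Sum>j\<in>UNIV. \<rho> t $ j) = 1"
proof (cases "t = 0")
  case False
  have "(\<Sum>j\<in>UNIV. \<rho> t $ j) = (\<Sum>j\<in>UNIV. \<rho> 0 $ j)"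
  proof (rule DERIV_isconst_end[where f="\<lambda>s. \<Sum>j\<in>UNIV. \<rho> s $ j"])
    fix x :: real assume "0 < x"
    then have "((\<lambda>s. \<Sum>j\<in>UNIV. \<rho> s $ j) has_real_derivative (\<Sum>j\<in>UNIV. drift x j)) (at x)"
      by (intro DERIV_sum component_has_derivative)
    then show "((\<lambda>s. \<Sum>j\<in>UNIV. \<rho> s $ j) has_real_derivative 0) (at x)"
      by (simp add: sum_velocity_eq_0)
  qed (use assms False in \<open>auto intro!: continuous_on_sum component_continuous_on\<close>)
  then show ?thesis using init by (simp add: prob_simplex_def)
qed (use init in \<open>simp add: prob_simplex_def\<close>)

lemma component_le_1:
  assumes "0 \<le> t" shows "\<rho> t $ j \<le> 1"
  using member_le_sum[of j UNIV "\<lambda>i. \<rho> t $ i"] component_nonneg[OF assms] mass_conserved[OF assms]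
  by simp

lemma component_decrease_bounded:
  assumes "0 \<le> t" and "t \<le> s"
  shows "\<rho> t $ k - \<kappa> * real CARD('n) * \<theta> 1 * (s - t) \<le> \<rho> s $ k"
proof -
  have "- (\<kappa> * real CARD('n) * \<theta> 1) * (s - t) \<le> \<rho> s $ k - \<rho> t $ k"
    using assms kappa_pos
    by (intro DERIV_ge_imp_increment[where f'="\<lambda>x. drift x k"] component_continuous_on
          component_has_derivative velocity_lower_bound theta_mono theta_nonneg
          component_le_1 component_nonneg) auto
  then show ?thesis by (simp add: algebra_simps)
qed

context
  fixes M :: 'n
  assumes initial_max: "\<And>l. \<rho> 0 $ l \<le> \<rho> 0 $ M"
begin

lemma max_component_stays_max: "0 \<le> t \<Longrightarrow> \<rho> t $ l \<le> \<rho> t $ M"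
  using order_preserved initial_max by blast

lemma gap_to_max_mono:
  assumes "0 \<le> s" and "s \<le> t"
  shows "\<rho> s $ M - \<rho> s $ k \<le> \<rho> t $ M - \<rho> t $ k"
proof -
  have "0 * (t - s) \<le> (\<rho> t $ M - \<rho> t $ k) - (\<rho> s $ M - \<rho> s $ k)"
  proof (rule DERIV_ge_imp_increment[where f'="\<lambda>x. drift x M - drift x k"])
    show "continuous_on {s..t} (\<lambda>x. \<rho> x $ M - \<rho> x $ k)"
      using assms by (intro continuous_on_diff component_continuous_on)
    fix x assume "s < x" "x < t"
    then have "0 < x" using assms by simp
    then show "((\<lambda>x. \<rho> x $ M - \<rho> x $ k) has_real_derivative drift x M - drift x k) (at x)"
      by (intro DERIV_diff component_has_derivative)
    have "drift x k \<le> drift x M"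
      using \<open>0 < x\<close> kappa_pos theta_mono theta_nonneg max_component_stays_max
      by (intro velocity_le_at_max) auto
    then show "0 \<le> drift x M - drift x k" by simp
  qed (use assms in simp)
  then show ?thesis by simp
qed

lemma max_component_growth:
  assumes "0 \<le> t" and "t \<le> s" and above: "\<And>x. t < x \<Longrightarrow> x < s \<Longrightarrow> a \<le> \<rho> x $ k"
  shows "\<rho> t $ M + \<kappa> * \<theta> a * (\<rho> 0 $ M - \<rho> 0 $ k) * (s - t) \<le> \<rho> s $ M"
proof -
  have "\<kappa> * \<theta> a * (\<rho> 0 $ M - \<rho> 0 $ k) * (s - t) \<le> \<rho> s $ M - \<rho> t $ M"
  proof (rule DERIV_ge_imp_increment[where f'="\<lambda>x. drift x M"])
    show "continuous_on {t..s} (\<lambda>x. \<rho> x $ M)"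
      using assms by (intro component_continuous_on)
    fix x assume x: "t < x" "x < s"
    then have "0 < x" using assms by simp
    then show "((\<lambda>x. \<rho> x $ M) has_real_derivative drift x M) (at x)"
      by (rule component_has_derivative)
    have "\<theta> a \<le> \<theta> (\<rho> x $ k)" using monoD[OF theta_mono above[OF x]] .
    moreover have "\<rho> 0 $ M - \<rho> 0 $ k \<le> \<rho> x $ M - \<rho> x $ k"
      using \<open>0 < x\<close> by (intro gap_to_max_mono) auto
    ultimately have "\<theta> a * (\<rho> 0 $ M - \<rho> 0 $ k) \<le> \<theta> (\<rho> x $ k) * (\<rho> x $ M - \<rho> x $ k)"
      using initial_max[of k] theta_nonneg by (intro mult_mono) auto
    then have "\<kappa> * \<theta> a * (\<rho> 0 $ M - \<rho> 0 $ k) \<le> \<kappa> * (\<theta> (\<rho> x $ k) * (\<rho> x $ M - \<rho> x $ k))"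
      using kappa_pos by (simp add: mult.assoc)
    also have "\<dots> \<le> drift x M"
      using \<open>0 < x\<close> kappa_pos theta_nonneg max_component_stays_max
      by (intro velocity_at_max_ge) auto
    finally show "\<kappa> * \<theta> a * (\<rho> 0 $ M - \<rho> 0 $ k) \<le> drift x M" .
  qed (use assms in simp)
  then show ?thesis by simp
qed

lemma max_component_mono:
  assumes "0 \<le> s" and "s \<le> t" shows "\<rho> s $ M \<le> \<rho> t $ M"
  using max_component_growth[of s t 0 M] component_nonneg assms by simp

lemma tendsto_0_below_max:
  assumes below: "\<rho> 0 $ k < \<rho> 0 $ M"
  shows "((\<lambda>t. \<rho> t $ k) \<longlongrightarrow> 0) at_top"
proof (rule tendstoI)
  fix e :: real assume "e > 0"
  define K where "K = \<kappa> * real CARD('n) * \<theta> 1"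
  define h where "h = e / (2 * (K + 1))"
  define c where "c = \<kappa> * \<theta> (e / 2) * (\<rho> 0 $ M - \<rho> 0 $ k)"
  have "K \<ge> 0" using kappa_pos theta_nonneg[of 1] by (simp add: K_def)
  then have "h > 0" and "K * h \<le> e / 2"
    using \<open>e > 0\<close> by (auto simp: h_def field_simps)
  have "c > 0" using kappa_pos theta_pos[of "e / 2"] \<open>e > 0\<close> below by (simp add: c_def)
  \<comment> \<open>\<open>\<rho>\<^sub>M\<close> is non-decreasing and bounded by 1, so it eventually gains less than \<open>c h\<close>.\<close>
  have "bdd_above ((\<lambda>s. \<rho> s $ M) ` {0..})"
    by (auto intro!: bdd_aboveI[where M=1] component_le_1)
  then obtain t0 where t0: "t0 \<ge> 0" and plateau: "\<And>s. s \<ge> 0 \<Longrightarrow> \<rho> s $ M < \<rho> t0 $ M + c * h"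
    using near_supremum[of "{0..}" "\<lambda>s. \<rho> s $ M" "c * h"] \<open>c > 0\<close> \<open>h > 0\<close> by auto
  show "eventually (\<lambda>t. dist (\<rho> t $ k) 0 < e) at_top"
  proof (rule eventually_at_top_linorderI[of t0])
    fix t assume "t0 \<le> t"
    show "dist (\<rho> t $ k) 0 < e"
    proof (rule ccontr)
      assume "\<not> dist (\<rho> t $ k) 0 < e"
      then have "e \<le> \<rho> t $ k" using component_nonneg[of t k] t0 \<open>t0 \<le> t\<close> by simp
      \<comment> \<open>then \<open>\<rho>\<^sub>k \<ge> e/2\<close> on \<open>[t, t + h]\<close>, which makes \<open>\<rho>\<^sub>M\<close> gain at least \<open>c h\<close>\<close>
      then have "e / 2 \<le> \<rho> x $ k" if "t < x" "x < t + h" for x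
        using component_decrease_bounded[of t x k] t0 \<open>t0 \<le> t\<close> that \<open>K \<ge> 0\<close> \<open>K * h \<le> e / 2\<close>
          mult_left_mono[of "x - t" h K]
        unfolding K_def by fastforce
      then have "\<rho> t $ M + c * h \<le> \<rho> (t + h) $ M"
        using max_component_growth[of t "t + h" "e / 2" k] t0 \<open>t0 \<le> t\<close> \<open>h > 0\<close>
        by (simp add: c_def)
      moreover have "\<rho> t0 $ M \<le> \<rho> t $ M" using max_component_mono t0 \<open>t0 \<le> t\<close> by blast
      ultimately show False using plateau[of "t + h"] t0 \<open>t0 \<le> t\<close> \<open>h > 0\<close> by linarith
    qed
  qed
qed

lemma tendsto_max_share:
  defines "SM \<equiv> {j. \<rho> 0 $ j = \<rho> 0 $ M}"
  assumes "j \<in> SM"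
  shows "((\<lambda>t. \<rho> t $ j) \<longlongrightarrow> 1 / real (card SM)) at_top"
proof -
  have card_pos: "real (card SM) > 0" using assms by (auto simp: card_gt_0_iff)
  have share: "\<rho> t $ j = (1 - (\<Sum>k\<in>UNIV - SM. \<rho> t $ k)) / real (card SM)" if "0 \<le> t" for t
  proof -
    have "(\<Sum>i\<in>SM. \<rho> t $ i) = (\<Sum>i\<in>SM. \<rho> t $ j)"
    proof (rule sum.cong)
      fix i assume "i \<in> SM"
      with assms show "\<rho> t $ i = \<rho> t $ j" by (intro tie_preserved[OF that]) (simp add: SM_def)
    qed simp
    then have "(\<Sum>i\<in>SM. \<rho> t $ i) = real (card SM) * \<rho> t $ j" by simp
    moreover have "(\<Sum>i\<in>UNIV. \<rho> t $ i) = (\<Sum>k\<in>UNIV - SM. \<rho> t $ k) + (\<Sum>i\<in>SM. \<rho> t $ i)"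
      by (rule sum.subset_diff) simp_all
    ultimately show ?thesis
      using mass_conserved[OF that] card_pos by (simp add: eq_divide_eq algebra_simps card_gt_0_iff)
  qed
  have "((\<lambda>t. \<Sum>k\<in>UNIV - SM. \<rho> t $ k) \<longlongrightarrow> 0) at_top"
  proof (rule tendsto_null_sum)
    fix k assume "k \<in> UNIV - SM"
    then show "((\<lambda>t. \<rho> t $ k) \<longlongrightarrow> 0) at_top"
      using initial_max[of k] by (intro tendsto_0_below_max) (auto simp: SM_def)
  qed
  then have "((\<lambda>t. 1 - (\<Sum>k\<in>UNIV - SM. \<rho> t $ k)) \<longlongrightarrow> 1 - 0) at_top"
    by (intro tendsto_diff tendsto_const)
  then have "((\<lambda>t. (1 - (\<Sum>k\<in>UNIV - SM. \<rho> t $ k)) / real (card SM)) \<longlongrightarrow> (1 - 0) / real (card SM)) at_top"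
    using card_pos by (intro tendsto_divide tendsto_const) auto
  then have "((\<lambda>t. (1 - (\<Sum>k\<in>UNIV - SM. \<rho> t $ k)) / real (card SM)) \<longlongrightarrow> 1 / real (card SM)) at_top"
    by simp
  moreover have "eventually (\<lambda>t. (1 - (\<Sum>k\<in>UNIV - SM. \<rho> t $ k)) / real (card SM) = \<rho> t $ j) at_top"
    using share by (intro eventually_at_top_linorderI[of 0]) simp
  ultimately show ?thesis
    by (rule Lim_transform_eventually)
qed

end

end

theorem theorem3p1:
  fixes \<kappa> :: real
    and \<theta>t :: "real \<Rightarrow> real"
    and \<rho> :: "real \<Rightarrow> real ^ 'n"
  assumes n2: "CARD('n) \<ge> 2"
    and kpos: "\<kappa> > 0"
    and th_nonneg: "\<And>s. \<theta>t s \<ge> 0"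
    and th_lip: "locally_lipschitz_real \<theta>t"
    and th_mono: "mono \<theta>t"
    and th_zero: "\<And>s. s \<le> 0 \<Longrightarrow> \<theta>t s = 0"
    and th_pos: "\<And>s. s > 0 \<Longrightarrow> \<theta>t s > 0"
    and ode: "\<And>t. t \<ge> 0 \<Longrightarrow>
       (\<rho> has_vector_derivative
          (\<chi> j. \<kappa> * (\<Sum>k\<in>UNIV. \<theta>t (min (\<rho> t $ j) (\<rho> t $ k)) * (\<rho> t $ j - \<rho> t $ k))))
       (at t within {0..})"
    and init: "\<rho> 0 \<in> prob_simplex"
  shows "let SM = {j. \<rho> 0 $ j = (MAX k\<in>UNIV. \<rho> 0 $ k)}; m = card SM in
         (\<forall>j\<in>SM. ((\<lambda>t. \<rho> t $ j) \<longlongrightarrow> 1 / real m) at_top) \<and>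
         (\<forall>k. k \<notin> SM \<longrightarrow> ((\<lambda>t. \<rho> t $ k) \<longlongrightarrow> 0) at_top)"
proof -
  interpret aggregation_flow \<kappa> \<theta>t \<rho>
    by (rule aggregation_flow.intro[OF kpos th_nonneg th_lip th_mono th_zero th_pos ode init])
  have "(MAX k\<in>UNIV. \<rho> 0 $ k) \<in> range (\<lambda>k. \<rho> 0 $ k)" by (rule Max_in) auto
  then obtain M where M: "\<rho> 0 $ M = (MAX k\<in>UNIV. \<rho> 0 $ k)" by (metis rangeE)
  then have initial_max: "\<rho> 0 $ l \<le> \<rho> 0 $ M" for l by simp
  show ?thesis
    unfolding Let_def M[symmetric]
    using tendsto_max_share[OF initial_max] tendsto_0_below_max[OF initial_max] initial_max
    by (simp add: order.strict_iff_order)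
qed

end
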